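(* Let $n\in\{2,3\}$, $0<2\alpha_m<2\alpha_M<2\alpha'<\pi$ and $k>0$. Write $(\mathcal Q,\mathfrak P)\in\mathscr G(\alpha_m,\alpha_M,\alpha',n)$ if: $\mathcal Q\subset\mathbb R^n$ is an open spherical cone and $\mathfrak P\subset\mathbb R^n$ an open convex polyhedral cone with a common vertex $x_c$; $\mathfrak P\subset\mathcal Q$; $\mathcal Q$ has opening angle at most $2\alpha'$; in 2D, $\mathfrak P$ has opening angle in $]2\alpha_m,2\alpha_M[$; in 3D, $\mathfrak P$ is mapped to $]0,\infty[^3$ by a rigid motion. Then there exist $\tau_0=k\,C(\alpha_m,\alpha_M,\alpha',n)>0$ and $c=c(\alpha_m,\alpha_M,n)>0$ such that for every $(\mathcal Q,\mathfrak P)\in\mathscr G(\alpha_m,\alpha_M,\alpha',n)$ there is a curve $\tau\mapsto\rho(\tau)\in\mathbb C^n$, $\tau>0$ (depending on $\mathcal Q$), satisfying $\rho(\tau)\cdot\rho(\tau)+k^2=0$, $\tau=|\Re\rho(\tau)|$, $\Re\rho(\tau)\cdot(x-x_c)\le-\cos\alpha'\,|\Re\rho(\tau)|\,|x-x_c|$ for all $x\in\mathcal Q$, and such that for all $\tau\ge\tau_0$, \[ \Big|\int_{\mathfrak P}e^{\rho(\tau)\cdot(x-x_c)}dx\Big|\ge c\,\tau^{-n}. \]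
   Context: Here $a\cdot b=\sum_ja_jb_j$ (bilinear, no conjugation) for $a,b\in\mathbb C^n$. An open spherical cone with vertex $x_c$, axis unit vector $v$ and opening angle $2\theta$ ($0<\theta<\pi/2$) is $\{x\neq x_c: (x-x_c)\cdot v>|x-x_c|\cos\theta\}$. In 2D the opening angle of a convex cone is the angle between its two boundary rays. *)

theory Defs
  imports "HOL-Analysis.Analysis"
begin

definition cdot :: "complex^'n \<Rightarrow> complex^'n \<Rightarrow> complex" where
  "cdot a b = (\<Sum>j\<in>UNIV. a $ j * b $ j)"

definition cvec :: "real^'n \<Rightarrow> complex^'n" where
  "cvec x = (\<chi> j. complex_of_real (x $ j))"

definition Re_vec :: "complex^'n \<Rightarrow> real^'n" where
  "Re_vec z = (\<chi> j. Re (z $ j))"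

definition spherical_cone :: "real^'n \<Rightarrow> real^'n \<Rightarrow> real \<Rightarrow> (real^'n) set" where
  "spherical_cone xc v \<theta> = {x. x \<noteq> xc \<and> (x - xc) \<bullet> v > norm (x - xc) * cos \<theta>}"

definition open_polyhedral_cone :: "(real^'n) set \<Rightarrow> real^'n \<Rightarrow> bool" where
  "open_polyhedral_cone P xc \<longleftrightarrow>
     (\<exists>A. finite A \<and> P = {x. \<forall>a\<in>A. a \<bullet> (x - xc) > 0}) \<and> P \<noteq> {}"

definition rigid_motion :: "(real^'n \<Rightarrow> real^'n) \<Rightarrow> bool" where
  "rigid_motion f \<longleftrightarrow> (\<exists>A b. orthogonal_matrix A \<and> det A = 1 \<and> f = (\<lambda>x. A *v x + b))"

definition in_G :: "real \<Rightarrow> real \<Rightarrow> real \<Rightarrow> (real^'n) set \<Rightarrow> (real^'n) set \<Rightarrow> real^'n \<Rightarrow> bool" where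
  "in_G \<alpha>m \<alpha>M \<alpha>' Q P xc \<longleftrightarrow>
     (\<exists>v \<theta>. norm v = 1 \<and> 0 < \<theta> \<and> \<theta> < pi / 2 \<and> Q = spherical_cone xc v \<theta>
            \<and> 2 * \<theta> \<le> 2 * \<alpha>') \<and>
     open_polyhedral_cone P xc \<and> P \<subseteq> Q \<and>
     (CARD('n) = 2 \<longrightarrow>
        (\<exists>u w. u \<noteq> 0 \<and> w \<noteq> 0 \<and> P = {xc + s *\<^sub>R u + t *\<^sub>R w | s t. 0 < s \<and> 0 < t} \<and>
               2 * \<alpha>m < arccos ((u \<bullet> w) / (norm u * norm w)) \<and>
               arccos ((u \<bullet> w) / (norm u * norm w)) < 2 * \<alpha>M)) \<and>
     (CARD('n) = 3 \<longrightarrow>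
        (\<exists>f. rigid_motion f \<and> f xc = 0 \<and> f ` P = {y. \<forall>i. 0 < y $ i}))"

end

theory Submission
  imports Defs
begin

text \<open>
  Let \<open>v\<close> be the axis of the spherical cone and \<open>z\<close> a unit vector orthogonal to it, and put
  \<open>\<rho>(\<tau>) = -\<tau> v + i sqrt(\<tau>\<^sup>2 + k\<^sup>2) z\<close>, so that \<open>\<rho> \<cdot> \<rho> = -k\<^sup>2\<close> and \<open>Re \<rho> = -\<tau> v\<close>.
  The polyhedral cone is \<open>x\<^sub>c + M(]0,\<infinity>[\<^sup>n)\<close> for an invertible linear map \<open>M\<close> with
  edges \<open>m\<^sub>j = M e\<^sub>j\<close>; a linear change of variables and Fubini give
  \<open>\<integral> exp(\<rho> \<cdot> (x - x\<^sub>c)) dx = |det M| \<Prod>\<^sub>j (-1 / (\<rho> \<cdot> m\<^sub>j))\<close>, the integral converging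
  because the edges lie in the closed spherical cone, whence \<open>Re (\<rho> \<cdot> m\<^sub>j) = -\<tau> v \<cdot> m\<^sub>j < 0\<close>.
  As \<open>|\<rho>| \<le> 2\<tau>\<close> for \<open>\<tau> \<ge> k\<close>, the modulus of the integral is at least
  \<open>|det M| / ((2\<tau>)\<^sup>n \<Prod>\<^sub>j |m\<^sub>j|)\<close>, and this quotient of \<open>|det M|\<close> by the edge lengths is
  the sine of the opening angle in 2D and equals 1 for a rotated octant in 3D.
\<close>

definition perm_vec :: "('b \<Rightarrow> 'a) \<Rightarrow> real^'a \<Rightarrow> real^'b" where
  "perm_vec e y = (\<chi> j. y $ e j)"

lemma perm_vec_nth [simp]: "perm_vec e y $ j = y $ e j"
  by (simp add: perm_vec_def)

lemma linear_perm_vec: "linear (perm_vec e)"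
  by (auto simp: linear_iff vec_eq_iff)

lemma perm_vec_inv_left: "bij e \<Longrightarrow> perm_vec (inv e) (perm_vec e y) = y"
  by (simp add: vec_eq_iff bij_inv_eq_iff bij_is_surj surj_f_inv_f)

lemma perm_vec_inv_right: "bij e \<Longrightarrow> perm_vec e (perm_vec (inv e) y) = y"
  by (simp add: vec_eq_iff bij_is_inj)

lemma inner_perm_vec:
  fixes e :: "'b::finite \<Rightarrow> 'a::finite"
  assumes "bij e"
  shows "perm_vec e x \<bullet> perm_vec e y = x \<bullet> y"
proof -
  have "perm_vec e x \<bullet> perm_vec e y = (\<Sum>j\<in>UNIV. x $ e j * y $ e j)"
    by (simp add: inner_vec_def)
  also have "\<dots> = (\<Sum>i\<in>UNIV. x $ i * y $ i)"
    using assms by (intro sum.reindex_bij_betw) (simp add: bij_betw_def)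
  finally show ?thesis by (simp add: inner_vec_def)
qed

lemma norm_perm_vec: "bij e \<Longrightarrow> norm (perm_vec e x) = norm x"
  by (simp add: norm_eq_sqrt_inner inner_perm_vec)

lemma orthogonal_transformation_perm_vec: "bij e \<Longrightarrow> orthogonal_transformation (perm_vec e)"
  by (simp add: orthogonal_transformation_def linear_perm_vec inner_perm_vec)

lemma perm_vec_vimage_box:
  assumes "bij e"
  shows "perm_vec e -` box l u = box (perm_vec (inv e) l) (perm_vec (inv e) u)"
proof -
  have "(\<forall>j. l $ j < y $ e j \<and> y $ e j < u $ j) \<longleftrightarrow> (\<forall>i. l $ inv e i < y $ i \<and> y $ i < u $ inv e i)"
    for y
    using assms by (metis bij_inv_eq_iff)
  then show ?thesis by (auto simp: mem_box_cart)
qed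

lemma prod_Basis_vec: "(\<Prod>b\<in>(Basis::(real^'n) set). F b) = (\<Prod>i\<in>UNIV. F (axis i 1))"
proof -
  have "(Basis::(real^'n) set) = range (\<lambda>i. axis i 1)"
    by (auto simp: Basis_vec_def)
  then show ?thesis
    by (metis (no_types, lifting) inj_onI axis_eq_axis prod.reindex_cong zero_neq_one)
qed

section \<open>Change of variables for Lebesgue measure\<close>

lemma measure_box_perm_vec:
  assumes e: "bij e" and le: "\<And>b. b \<in> Basis \<Longrightarrow> l \<bullet> b \<le> u \<bullet> b"
  shows "measure lebesgue (box (perm_vec (inv e) l) (perm_vec (inv e) u)) = (\<Prod>b\<in>Basis. (u - l) \<bullet> b)"
proof -
  have "l $ i \<le> u $ i" for i
    using le[of "axis i 1"] by (auto simp: Basis_vec_def inner_axis)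
  then have "\<forall>b\<in>Basis. perm_vec (inv e) l \<bullet> b \<le> perm_vec (inv e) u \<bullet> b"
    by (auto simp: Basis_vec_def inner_axis)
  then have "measure lebesgue (box (perm_vec (inv e) l) (perm_vec (inv e) u)) = (\<Prod>i\<in>UNIV. u $ inv e i - l $ inv e i)"
    by (simp add: measure_lborel_box_eq prod_Basis_vec inner_axis)
  also have "\<dots> = (\<Prod>j\<in>UNIV. u $ j - l $ j)"
    by (rule prod.reindex_bij_betw) (use bij_imp_bij_inv[OF e] in \<open>simp add: bij_betw_def\<close>)
  finally show ?thesis
    by (simp add: prod_Basis_vec inner_axis)
qed

text \<open>
  The library computes the measure of linear images only over a well-ordered index type;
  a coordinate bijection \<open>e\<close> transports such a map to an arbitrary finite index type.
\<close>
lemma lborel_eq_density_linear: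
  fixes e :: "'k::finite \<Rightarrow> 'm::{finite,wellorder}" and L :: "real^'m::_ \<Rightarrow> real^'m::_"
  assumes e: "bij e" and L: "linear L" and d: "det (matrix L) \<noteq> 0"
  shows "lborel = density (distr lborel borel (perm_vec e \<circ> L)) (\<lambda>_. ennreal \<bar>det (matrix L)\<bar>)"
proof (rule lborel_eqI)
  obtain Li where Li: "linear Li" "\<And>x. Li (L x) = x" "\<And>x. L (Li x) = x"
    using linear_injective_isomorphism[OF L] det_nz_iff_inj[OF L] d by metis
  have det_Li: "det (matrix Li) * det (matrix L) = 1"
  proof -
    have "Li \<circ> L = id" using Li by auto
    then have "matrix Li ** matrix L = mat 1"
      using matrix_compose[OF L Li(1)] by (simp add: matrix_id_mat_1)
    then show ?thesis by (metis det_I det_mul)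
  qed
  have [measurable]: "perm_vec e \<circ> L \<in> borel_measurable borel"
    using linear_compose[OF L linear_perm_vec[of e]]
    by (intro borel_measurable_continuous_onI linear_continuous_on) (simp add: linear_conv_bounded_linear)
  fix l u :: "real^'k" assume le: "\<And>b. b \<in> Basis \<Longrightarrow> l \<bullet> b \<le> u \<bullet> b"
  define l' where "l' = perm_vec (inv e) l"
  define u' where "u' = perm_vec (inv e) u"
  have vimage: "(perm_vec e \<circ> L) -` box l u = Li ` box l' u'"
  proof -
    have "(perm_vec e \<circ> L) -` box l u = L -` (perm_vec e -` box l u)"
      by auto
    also have "\<dots> = L -` box l' u'"
      by (simp add: perm_vec_vimage_box[OF e] l'_def u'_def)
    also have "\<dots> = Li ` box l' u'"
      using Li by (auto simp: image_iff) metis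
    finally show ?thesis .
  qed
  have "emeasure lborel (Li ` box l' u') = ennreal (\<bar>det (matrix Li)\<bar> * measure lebesgue (box l' u'))"
  proof -
    have "Li ` box l' u' \<in> sets borel"
      by (metis vimage \<open>perm_vec e \<circ> L \<in> borel_measurable borel\<close> measurable_sets_borel open_box borel_open)
    then have "emeasure lborel (Li ` box l' u') = emeasure lebesgue (Li ` box l' u')"
      by simp
    also have "\<dots> = ennreal (measure lebesgue (Li ` box l' u'))"
      using measurable_linear_image[OF Li(1) lmeasurable_box] by (simp add: emeasure_eq_measure2)
    finally show ?thesis
      by (simp add: measure_linear_image[OF Li(1) lmeasurable_box])
  qed
  moreover have "measure lebesgue (box l' u') = (\<Prod>b\<in>Basis. (u - l) \<bullet> b)"
    unfolding l'_def u'_def by (rule measure_box_perm_vec[OF e le])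
  ultimately show "emeasure (density (distr lborel borel (perm_vec e \<circ> L)) (\<lambda>_. ennreal \<bar>det (matrix L)\<bar>)) (box l u)
      = (\<Prod>b\<in>Basis. (u - l) \<bullet> b)"
    by (simp add: emeasure_density nn_integral_cmult_indicator emeasure_distr vimage
        ennreal_mult'[symmetric] abs_mult[symmetric] mult.assoc[symmetric]
        mult.commute[of "det (matrix L)"] det_Li)
qed simp

lemma lborel_integrable_density_distr_iff:
  fixes \<Psi> :: "'a::euclidean_space \<Rightarrow> 'b::euclidean_space" and h :: "'b \<Rightarrow> complex"
  assumes M: "lborel = density (distr lborel borel \<Psi>) (\<lambda>_. ennreal d)" and d: "d > 0"
    and [measurable]: "\<Psi> \<in> borel_measurable borel" "h \<in> borel_measurable borel"
  shows "integrable lborel h \<longleftrightarrow> integrable lborel (\<lambda>s. h (\<Psi> s))"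
proof -
  have "integrable lborel h \<longleftrightarrow> integrable (distr lborel borel \<Psi>) (\<lambda>x. d *\<^sub>R h x)"
    using d by (subst M) (subst integrable_density; auto)
  also have "\<dots> \<longleftrightarrow> integrable lborel (\<lambda>s. d *\<^sub>R h (\<Psi> s))"
    by (subst integrable_distr_eq) auto
  also have "\<dots> \<longleftrightarrow> integrable lborel (\<lambda>s. h (\<Psi> s))"
  proof
    assume "integrable lborel (\<lambda>s. d *\<^sub>R h (\<Psi> s))"
    then have "integrable lborel (\<lambda>s. inverse d *\<^sub>R (d *\<^sub>R h (\<Psi> s)))"
      by (rule integrable_scaleR_right)
    then show "integrable lborel (\<lambda>s. h (\<Psi> s))"
      using d by simp
  qed auto
  finally show ?thesis .
qed

lemma lborel_integral_density_distr:
  fixes \<Psi> :: "'a::euclidean_space \<Rightarrow> 'b::euclidean_space" and h :: "'b \<Rightarrow> complex"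
  assumes M: "lborel = density (distr lborel borel \<Psi>) (\<lambda>_. ennreal d)" and d: "d > 0"
    and [measurable]: "\<Psi> \<in> borel_measurable borel" "h \<in> borel_measurable borel"
  shows "integral\<^sup>L lborel h = d *\<^sub>R integral\<^sup>L lborel (\<lambda>s. h (\<Psi> s))"
proof -
  have "integral\<^sup>L lborel h = integral\<^sup>L (distr lborel borel \<Psi>) (\<lambda>x. d *\<^sub>R h x)"
    using d by (subst M) (subst integral_density; auto)
  also have "\<dots> = integral\<^sup>L lborel (\<lambda>s. d *\<^sub>R h (\<Psi> s))"
    by (subst integral_distr) auto
  finally show ?thesis by simp
qed

lemma
  fixes h :: "'b::euclidean_space \<Rightarrow> complex"
  assumes [measurable]: "h \<in> borel_measurable borel"
  shows lborel_integrable_translate_iff: "integrable lborel h \<longleftrightarrow> integrable lborel (\<lambda>y. h (c + y))"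
    and lborel_integral_translate: "integral\<^sup>L lborel h = integral\<^sup>L lborel (\<lambda>y. h (c + y))"
proof -
  have M: "lborel = distr lborel borel ((+) c)"
    by (simp add: lborel_distr_plus)
  show "integrable lborel h \<longleftrightarrow> integrable lborel (\<lambda>y. h (c + y))"
    by (subst M) (subst integrable_distr_eq; auto)
  show "integral\<^sup>L lborel h = integral\<^sup>L lborel (\<lambda>y. h (c + y))"
    by (subst M) (subst integral_distr; auto)
qed

section \<open>Exponential integrals over orthants\<close>

lemma tendsto_exp_mult_neg_at_top:
  assumes "(a::real) < 0"
  shows "((\<lambda>t. exp (t * a)) \<longlongrightarrow> 0) at_top"
proof -
  have "filterlim (\<lambda>t. a * t) at_bot at_top"
    by (rule filterlim_tendsto_neg_mult_at_bot[OF tendsto_const assms filterlim_ident])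
  then show ?thesis
    by (auto intro!: exp_at_bot[THEN filterlim_compose] simp: mult.commute)
qed

lemma integrable_exp_halfline:
  fixes a :: complex
  assumes a: "Re a < 0"
  shows "integrable lborel (\<lambda>t. indicator {0<..} t *\<^sub>R exp (of_real t * a))"
proof -
  have "Re a \<noteq> 0" using a by auto
  have "set_integrable lborel (einterval 0 \<infinity>) (\<lambda>t. exp (t * Re a))"
  proof (rule interval_integral_FTC_nonneg)
    show "((\<lambda>t. exp (t * Re a) / Re a) has_real_derivative exp (x * Re a)) (at x)" for x
      using \<open>Re a \<noteq> 0\<close> by (auto intro!: derivative_eq_intros)
    show "(((\<lambda>t. exp (t * Re a) / Re a) \<circ> real_of_ereal) \<longlongrightarrow> 1 / Re a) (at_right 0)"
      using \<open>Re a \<noteq> 0\<close> by (auto simp: zero_ereal_def ereal_tendsto_simps intro!: tendsto_eq_intros)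
    show "(((\<lambda>t. exp (t * Re a) / Re a) \<circ> real_of_ereal) \<longlongrightarrow> 0 / Re a) (at_left \<infinity>)"
      unfolding ereal_tendsto_simps by (intro tendsto_intros tendsto_exp_mult_neg_at_top a \<open>Re a \<noteq> 0\<close>)
  qed auto
  then show ?thesis
    unfolding set_integrable_def
    by (rule Bochner_Integration.integrable_bound)
      (auto simp: zero_ereal_def indicator_def norm_exp_eq_Re)
qed

lemma integral_exp_halfline:
  fixes a :: complex
  assumes a: "Re a < 0"
  shows "integral\<^sup>L lborel (\<lambda>t. indicator {0<..} t *\<^sub>R exp (of_real t * a)) = - 1 / a"
proof -
  have "a \<noteq> 0" using a by auto
  have "(LBINT t=0..\<infinity>. exp (of_real t * a)) = 0 - 1 / a"
  proof (rule interval_integral_FTC_integrable)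
    show "((\<lambda>t. exp (of_real t * a) / a) has_vector_derivative exp (of_real x * a)) (at x)" for x
    proof -
      have "((\<lambda>z. exp (z * a) / a) has_field_derivative exp (of_real x * a)) (at (of_real x))"
        using \<open>a \<noteq> 0\<close> by (auto intro!: derivative_eq_intros)
      from has_vector_derivative_real_field[OF this] show ?thesis by simp
    qed
    show "set_integrable lborel (einterval 0 \<infinity>) (\<lambda>t. exp (of_real t * a))"
      using integrable_exp_halfline[OF a] by (simp add: set_integrable_def zero_ereal_def)
    show "(((\<lambda>t. exp (of_real t * a) / a) \<circ> real_of_ereal) \<longlongrightarrow> 1 / a) (at_right 0)"
      using \<open>a \<noteq> 0\<close> by (auto simp: zero_ereal_def ereal_tendsto_simps intro!: tendsto_eq_intros)
    have "((\<lambda>t. exp (t * Re a) / norm a) \<longlongrightarrow> 0 / norm a) at_top"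
      using \<open>a \<noteq> 0\<close> by (intro tendsto_intros tendsto_exp_mult_neg_at_top a) simp
    then have "((\<lambda>t. norm (exp (of_real t * a) / a)) \<longlongrightarrow> 0) at_top"
      by (simp add: norm_divide norm_exp_eq_Re)
    then show "(((\<lambda>t. exp (of_real t * a) / a) \<circ> real_of_ereal) \<longlongrightarrow> 0) (at_left \<infinity>)"
      unfolding ereal_tendsto_simps by (rule tendsto_norm_zero_cancel)
  qed (auto intro!: continuous_intros)
  then show ?thesis
    by (simp add: interval_lebesgue_integral_0_infty set_lebesgue_integral_def)
qed

lemma
  fixes f :: "'a::euclidean_space \<Rightarrow> real \<Rightarrow> complex"
  assumes int: "\<And>b. b \<in> Basis \<Longrightarrow> integrable lborel (f b)"
  shows integrable_lborel_prod_Basis: "integrable lborel (\<lambda>x::'a. \<Prod>b\<in>Basis. f b (x \<bullet> b))"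
    and integral_lborel_prod_Basis:
      "integral\<^sup>L lborel (\<lambda>x::'a. \<Prod>b\<in>Basis. f b (x \<bullet> b)) = (\<Prod>b\<in>Basis. integral\<^sup>L lborel (f b))"
proof -
  interpret product_sigma_finite "\<lambda>_::'a. lborel :: real measure" by standard
  define T where "T = (\<lambda>g. \<Sum>b\<in>(Basis::'a set). g b *\<^sub>R b)"
  have [measurable]: "T \<in> borel_measurable (\<Pi>\<^sub>M b\<in>Basis. lborel)"
    unfolding T_def by measurable
  have [measurable]: "\<And>b. b \<in> Basis \<Longrightarrow> f b \<in> borel_measurable lborel"
    using int by auto
  have "T g \<bullet> b = g b" if "b \<in> Basis" for g b
    using that by (simp add: T_def inner_sum_left inner_Basis if_distrib cong: if_cong)
  then have eq: "(\<lambda>g. \<Prod>b\<in>Basis. f b (T g \<bullet> b)) = (\<lambda>g. \<Prod>b\<in>Basis. f b (g b))"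
    by (auto intro!: prod.cong)
  have meas: "(\<lambda>x::'a. \<Prod>b\<in>Basis. f b (x \<bullet> b)) \<in> borel_measurable borel"
    by measurable
  have "integrable (\<Pi>\<^sub>M b\<in>Basis. lborel) (\<lambda>g. \<Prod>b\<in>Basis. f b (g b))"
    by (rule product_integrable_prod) (auto intro: int)
  then show "integrable lborel (\<lambda>x::'a. \<Prod>b\<in>Basis. f b (x \<bullet> b))"
    by (subst lborel_eq, subst integrable_distr_eq) (auto simp: T_def[symmetric] eq intro!: meas)
  show "integral\<^sup>L lborel (\<lambda>x::'a. \<Prod>b\<in>Basis. f b (x \<bullet> b)) = (\<Prod>b\<in>Basis. integral\<^sup>L lborel (f b))"
    by (subst lborel_eq, subst integral_distr)
      (auto simp: T_def[symmetric] eq intro!: meas product_integral_prod int)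
qed

lemma
  fixes a :: "'m::finite \<Rightarrow> complex"
  assumes a: "\<And>j. Re (a j) < 0"
  shows integrable_exp_orthant:
      "integrable lborel (\<lambda>s::real^'m. indicator {s. \<forall>j. 0 < s$j} s *\<^sub>R exp (\<Sum>j\<in>UNIV. of_real (s$j) * a j))"
    and integral_exp_orthant:
      "integral\<^sup>L lborel (\<lambda>s::real^'m. indicator {s. \<forall>j. 0 < s$j} s *\<^sub>R exp (\<Sum>j\<in>UNIV. of_real (s$j) * a j))
        = (\<Prod>j\<in>UNIV. - 1 / a j)"
proof -
  define ix where "ix b = (SOME j. b = axis j (1::real))" for b :: "real^'m"
  have ix: "ix (axis j 1) = j" for j
    unfolding ix_def by (rule some_equality) (auto simp: axis_eq_axis)
  define f where "f b t = indicator {0<..} t *\<^sub>R exp (of_real t * a (ix b))" for b :: "real^'m" and t :: real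
  have eq: "indicator {s. \<forall>j. 0 < s$j} s *\<^sub>R exp (\<Sum>j\<in>UNIV. of_real (s$j) * a j)
      = (\<Prod>b\<in>Basis. f b (s \<bullet> b))" for s :: "real^'m"
  proof (cases "\<forall>j. 0 < s$j")
    case True
    then show ?thesis by (simp add: prod_Basis_vec f_def ix inner_axis exp_sum)
  next
    case False
    then obtain j where "\<not> 0 < s$j" by auto
    then show ?thesis
      using False by (auto simp: prod_Basis_vec f_def ix inner_axis intro!: prod_zero[symmetric] exI[of _ j])
  qed
  have int: "integrable lborel (f b)" for b
    unfolding f_def by (rule integrable_exp_halfline[OF a])
  have val: "integral\<^sup>L lborel (f b) = - 1 / a (ix b)" for b
    unfolding f_def by (rule integral_exp_halfline[OF a])
  show "integrable lborel (\<lambda>s::real^'m. indicator {s. \<forall>j. 0 < s$j} s *\<^sub>R exp (\<Sum>j\<in>UNIV. of_real (s$j) * a j))"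
    unfolding eq by (rule integrable_lborel_prod_Basis[OF int])
  show "integral\<^sup>L lborel (\<lambda>s::real^'m. indicator {s. \<forall>j. 0 < s$j} s *\<^sub>R exp (\<Sum>j\<in>UNIV. of_real (s$j) * a j))
          = (\<Prod>j\<in>UNIV. - 1 / a j)"
    unfolding eq integral_lborel_prod_Basis[OF int]
    by (simp add: prod_Basis_vec ix val)
qed

section \<open>Exponential integrals over simplicial cones\<close>

definition simplicial_cone :: "real^'n \<Rightarrow> (real^'m \<Rightarrow> real^'n) \<Rightarrow> (real^'n) set" where
  "simplicial_cone xc \<Psi> = (\<lambda>s. xc + \<Psi> s) ` {s. \<forall>j. 0 < s $ j}"

lemma cdot_cvec: "cdot \<rho> (cvec x) = (\<Sum>i\<in>UNIV. \<rho> $ i * of_real (x $ i))"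
  by (simp add: cdot_def cvec_def)

lemma Re_cdot_cvec: "Re (cdot \<rho> (cvec x)) = Re_vec \<rho> \<bullet> x"
  by (simp add: cdot_def cvec_def Re_vec_def inner_vec_def Re_sum)

lemma norm_cdot_cvec_le: "norm (cdot \<rho> (cvec x)) \<le> norm \<rho> * norm x"
proof -
  define p where "p = (\<chi> i. norm (\<rho> $ i))"
  define q where "q = (\<chi> i. \<bar>x $ i\<bar>)"
  have "norm (cdot \<rho> (cvec x)) \<le> (\<Sum>i\<in>UNIV. norm (\<rho> $ i * of_real (x $ i)))"
    unfolding cdot_cvec by (rule norm_sum)
  also have "\<dots> = p \<bullet> q"
    by (simp add: p_def q_def inner_vec_def norm_mult)
  also have "\<dots> \<le> norm p * norm q"
    by (rule norm_cauchy_schwarz)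
  also have "norm p = norm \<rho>" by (simp add: p_def norm_vec_def)
  also have "norm q = norm x" by (simp add: q_def norm_vec_def)
  finally show ?thesis .
qed

lemma cdot_cvec_linear:
  fixes \<Psi> :: "real^'m \<Rightarrow> real^'k"
  assumes "linear \<Psi>"
  shows "cdot \<rho> (cvec (\<Psi> s)) = (\<Sum>j\<in>UNIV. of_real (s $ j) * cdot \<rho> (cvec (\<Psi> (axis j 1))))"
proof -
  have "\<Psi> s = (\<Sum>j\<in>UNIV. s $ j *\<^sub>R \<Psi> (axis j 1))"
    using basis_expansion[of s] assms
    by (metis (no_types, lifting) linear_scale linear_sum scalar_mult_eq_scaleR sum.cong)
  then have "cdot \<rho> (cvec (\<Psi> s))
      = (\<Sum>i\<in>UNIV. \<Sum>j\<in>UNIV. of_real (s $ j) * (\<rho> $ i * of_real (\<Psi> (axis j 1) $ i)))"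
    by (simp add: cdot_cvec sum_component sum_distrib_left mult.left_commute)
  also have "\<dots> = (\<Sum>j\<in>UNIV. of_real (s $ j) * cdot \<rho> (cvec (\<Psi> (axis j 1))))"
    by (subst sum.swap) (simp add: cdot_cvec sum_distrib_left)
  finally show ?thesis .
qed

lemma perm_vec_linear_inverse:
  fixes e :: "'k::finite \<Rightarrow> 'm::finite" and L :: "real^'m \<Rightarrow> real^'m"
  assumes e: "bij e" and L: "linear L" and d: "det (matrix L) \<noteq> 0"
  obtains \<Phi> where "linear \<Phi>" "\<And>s. \<Phi> (perm_vec e (L s)) = s" "\<And>y. perm_vec e (L (\<Phi> y)) = y"
proof -
  obtain Li where Li: "linear Li" "\<And>x. Li (L x) = x" "\<And>x. L (Li x) = x"
    using linear_injective_isomorphism[OF L] det_nz_iff_inj[OF L] d by metis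
  have "linear (Li \<circ> perm_vec (inv e))"
    using linear_compose[OF linear_perm_vec Li(1)] .
  then show ?thesis
    by (rule that) (simp_all add: perm_vec_inv_left[OF e] perm_vec_inv_right[OF e] Li)
qed

lemma perm_vec_linear_axis_nonzero:
  assumes e: "bij e" and L: "linear L" and d: "det (matrix L) \<noteq> 0"
  shows "(perm_vec e \<circ> L) (axis j 1) \<noteq> 0"
proof
  obtain \<Phi> where \<Phi>: "linear \<Phi>" "\<And>s. \<Phi> (perm_vec e (L s)) = s"
    using perm_vec_linear_inverse[OF e L d] by metis
  assume "(perm_vec e \<circ> L) (axis j 1) = 0"
  then have "axis j (1::real) = \<Phi> 0"
    using \<Phi>(2)[of "axis j 1"] by simp
  then show False
    using linear_0[OF \<Phi>(1)] by (simp add: axis_eq_0_iff)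
qed

lemma
  fixes e :: "'k::finite \<Rightarrow> 'm::{finite,wellorder}" and L :: "real^'m::_ \<Rightarrow> real^'m::_"
    and xc :: "real^'k"
  assumes e: "bij e" and L: "linear L" and d: "det (matrix L) \<noteq> 0"
  shows sets_borel_simplicial_cone: "simplicial_cone xc (perm_vec e \<circ> L) \<in> sets borel"
    and simplicial_cone_mem_iff:
      "xc + perm_vec e (L s) \<in> simplicial_cone xc (perm_vec e \<circ> L) \<longleftrightarrow> (\<forall>j. 0 < s $ j)"
proof -
  obtain \<Phi> where \<Phi>: "linear \<Phi>" "\<And>s. \<Phi> (perm_vec e (L s)) = s" "\<And>y. perm_vec e (L (\<Phi> y)) = y"
    using perm_vec_linear_inverse[OF e L d] by blast
  have "x \<in> simplicial_cone xc (perm_vec e \<circ> L) \<longleftrightarrow> (\<forall>j. 0 < \<Phi> (x - xc) $ j)" for x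
  proof -
    have "x = xc + perm_vec e (L (\<Phi> (x - xc)))"
      by (simp add: \<Phi>(3))
    then show ?thesis
      by (auto simp: simplicial_cone_def \<Phi>(2) image_iff)
  qed
  then have eq: "simplicial_cone xc (perm_vec e \<circ> L) = (\<lambda>x. \<Phi> (x - xc)) -` (\<Inter>j. {s. s $ j > 0})"
    by auto
  have "continuous_on UNIV \<Phi>"
    using \<Phi>(1) by (simp add: linear_continuous_on linear_conv_bounded_linear)
  then have "continuous_on UNIV (\<lambda>x. \<Phi> (x - xc))"
    by (rule continuous_on_compose2) (auto intro!: continuous_intros)
  then show "simplicial_cone xc (perm_vec e \<circ> L) \<in> sets borel"
    unfolding eq by (intro borel_open open_vimage open_INT) (auto simp: open_halfspace_component_gt_cart)
  show "xc + perm_vec e (L s) \<in> simplicial_cone xc (perm_vec e \<circ> L) \<longleftrightarrow> (\<forall>j. 0 < s $ j)"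
    unfolding eq by (simp add: \<Phi>(2))
qed

lemma
  fixes e :: "'k::finite \<Rightarrow> 'm::{finite,wellorder}" and L :: "real^'m::_ \<Rightarrow> real^'m::_"
    and h :: "real^'k \<Rightarrow> complex"
  assumes e: "bij e" and L: "linear L" and d: "det (matrix L) \<noteq> 0"
    and [measurable]: "h \<in> borel_measurable borel"
  shows lborel_integrable_affine_iff:
      "integrable lborel h \<longleftrightarrow> integrable lborel (\<lambda>s. h (xc + perm_vec e (L s)))"
    and lborel_integral_affine:
      "integral\<^sup>L lborel h = \<bar>det (matrix L)\<bar> *\<^sub>R integral\<^sup>L lborel (\<lambda>s. h (xc + perm_vec e (L s)))"
proof -
  have M: "lborel = density (distr lborel borel (perm_vec e \<circ> L)) (\<lambda>_. ennreal \<bar>det (matrix L)\<bar>)"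
    by (rule lborel_eq_density_linear[OF e L d])
  have [measurable]: "perm_vec e \<circ> L \<in> borel_measurable borel"
    using linear_compose[OF L linear_perm_vec]
    by (intro borel_measurable_continuous_onI linear_continuous_on) (simp add: linear_conv_bounded_linear)
  have hm: "h \<in> borel_measurable borel" and hm': "(\<lambda>y. h (xc + y)) \<in> borel_measurable borel"
    by measurable
  have d': "\<bar>det (matrix L)\<bar> > 0"
    using d by simp
  show "integrable lborel h \<longleftrightarrow> integrable lborel (\<lambda>s. h (xc + perm_vec e (L s)))"
    using lborel_integrable_translate_iff[OF hm, of xc]
      lborel_integrable_density_distr_iff[OF M d' _ hm'] by simp
  show "integral\<^sup>L lborel h = \<bar>det (matrix L)\<bar> *\<^sub>R integral\<^sup>L lborel (\<lambda>s. h (xc + perm_vec e (L s)))"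
    using lborel_integral_translate[OF hm, of xc]
      lborel_integral_density_distr[OF M d' _ hm'] by simp
qed

lemma
  fixes e :: "'k::finite \<Rightarrow> 'm::{finite,wellorder}" and L :: "real^'m::_ \<Rightarrow> real^'m::_"
    and \<rho> :: "complex^'k" and xc :: "real^'k"
  assumes e: "bij e" and L: "linear L" and d: "det (matrix L) \<noteq> 0"
    and neg: "\<And>j. Re (cdot \<rho> (cvec (perm_vec e (L (axis j 1))))) < 0"
  shows integrable_exp_simplicial_cone:
      "(\<lambda>x. exp (cdot \<rho> (cvec (x - xc)))) integrable_on simplicial_cone xc (perm_vec e \<circ> L)"
    and integral_exp_simplicial_cone:
      "integral (simplicial_cone xc (perm_vec e \<circ> L)) (\<lambda>x. exp (cdot \<rho> (cvec (x - xc))))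
        = of_real \<bar>det (matrix L)\<bar> * (\<Prod>j\<in>UNIV. - 1 / cdot \<rho> (cvec (perm_vec e (L (axis j 1)))))"
proof -
  define P where "P = simplicial_cone xc (perm_vec e \<circ> L)"
  define F where "F x = exp (cdot \<rho> (cvec (x - xc)))" for x
  define a where "a j = cdot \<rho> (cvec (perm_vec e (L (axis j 1))))" for j
  have [measurable]: "(\<lambda>x::real^'k. x $ i) \<in> borel_measurable borel" for i
    by (intro borel_measurable_continuous_onI continuous_intros)
  have [measurable]: "F \<in> borel_measurable borel"
    unfolding F_def cdot_cvec vector_minus_component by measurable
  have [measurable]: "P \<in> sets borel"
    unfolding P_def by (rule sets_borel_simplicial_cone[OF e L d])
  have hm: "(\<lambda>x. indicator P x *\<^sub>R F x) \<in> borel_measurable borel"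
    by measurable
  have h: "indicator P (xc + perm_vec e (L s)) *\<^sub>R F (xc + perm_vec e (L s))
      = indicator {s. \<forall>j. 0 < s $ j} s *\<^sub>R exp (\<Sum>j\<in>UNIV. of_real (s $ j) * a j)" for s
    using cdot_cvec_linear[OF linear_compose[OF L linear_perm_vec], where \<rho>=\<rho> and s=s]
    by (simp add: P_def F_def a_def indicator_def simplicial_cone_mem_iff[OF e L d])
  have "integrable lborel (\<lambda>x. indicator P x *\<^sub>R F x)
      \<longleftrightarrow> integrable lborel (\<lambda>s. indicator P (xc + perm_vec e (L s)) *\<^sub>R F (xc + perm_vec e (L s)))"
    by (rule lborel_integrable_affine_iff[OF e L d hm])
  then have "integrable lborel (\<lambda>x. indicator P x *\<^sub>R F x)"
    unfolding h using integrable_exp_orthant[of a] neg by (simp add: a_def)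
  then have si: "set_integrable lborel P F"
    by (simp add: set_integrable_def)
  show "(\<lambda>x. exp (cdot \<rho> (cvec (x - xc)))) integrable_on simplicial_cone xc (perm_vec e \<circ> L)"
    using set_borel_integral_eq_integral(1)[OF si] by (simp add: P_def F_def[abs_def])
  have "integral P F = integral\<^sup>L lborel (\<lambda>x. indicator P x *\<^sub>R F x)"
    using set_borel_integral_eq_integral(2)[OF si] by (simp add: set_lebesgue_integral_def)
  also have "\<dots> = \<bar>det (matrix L)\<bar> *\<^sub>R
      integral\<^sup>L lborel (\<lambda>s. indicator P (xc + perm_vec e (L s)) *\<^sub>R F (xc + perm_vec e (L s)))"
    by (rule lborel_integral_affine[OF e L d hm])
  also have "\<dots> = \<bar>det (matrix L)\<bar> *\<^sub>R (\<Prod>j\<in>UNIV. - 1 / a j)"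
    unfolding h using integral_exp_orthant[of a] neg by (simp add: a_def)
  finally show "integral (simplicial_cone xc (perm_vec e \<circ> L)) (\<lambda>x. exp (cdot \<rho> (cvec (x - xc))))
       = of_real \<bar>det (matrix L)\<bar> * (\<Prod>j\<in>UNIV. - 1 / cdot \<rho> (cvec (perm_vec e (L (axis j 1)))))"
    by (simp add: P_def F_def[abs_def] a_def scaleR_conv_of_real)
qed

lemma simplicial_cone_edge_in_spherical_cone:
  fixes \<Psi> :: "real^'m \<Rightarrow> real^'n"
  assumes lin: "linear \<Psi>" and sub: "simplicial_cone xc \<Psi> \<subseteq> spherical_cone xc v \<theta>"
  shows "cos \<theta> * norm (\<Psi> (axis j 1)) \<le> v \<bullet> \<Psi> (axis j 1)"
proof -
  \<comment> \<open>The edge is the limit of the interior points \<open>\<Psi> (axis j 1 + \<epsilon> (1,\<dots>,1))\<close>.\<close>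
  define S where "S = \<Psi> (\<chi> i. 1)"
  define f where "f \<epsilon> = v \<bullet> (\<Psi> (axis j 1) + \<epsilon> *\<^sub>R S) - cos \<theta> * norm (\<Psi> (axis j 1) + \<epsilon> *\<^sub>R S)"
    for \<epsilon> :: real
  have "(f \<longlongrightarrow> f 0) (at_right 0)"
    unfolding f_def by (intro tendsto_intros)
  moreover have "eventually (\<lambda>\<epsilon>. 0 \<le> f \<epsilon>) (at_right 0)"
  proof (rule eventually_at_rightI[of 0 1])
    fix \<epsilon> :: real assume "\<epsilon> \<in> {0<..<1}"
    define s where "s = axis j 1 + \<epsilon> *\<^sub>R (\<chi> i. (1::real))"
    have "\<forall>i. 0 < s $ i"
      using \<open>\<epsilon> \<in> {0<..<1}\<close> by (auto simp: s_def axis_def)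
    then have "xc + \<Psi> s \<in> spherical_cone xc v \<theta>"
      using sub by (auto simp: simplicial_cone_def)
    moreover have "\<Psi> s = \<Psi> (axis j 1) + \<epsilon> *\<^sub>R S"
      using lin by (simp add: s_def S_def linear_add linear_scale)
    ultimately show "0 \<le> f \<epsilon>"
      by (simp add: spherical_cone_def f_def inner_commute mult.commute)
  qed simp
  ultimately have "0 \<le> f 0"
    by (rule tendsto_lowerbound) simp
  then show ?thesis
    by (simp add: f_def)
qed

section \<open>The complex frequency\<close>

lemma sum_vec_square: "(\<Sum>i\<in>UNIV. x $ i * x $ i) = (norm (x::real^'n))\<^sup>2"
  by (simp add: power2_norm_eq_inner inner_vec_def)

definition rho :: "real^'n \<Rightarrow> real^'n \<Rightarrow> real \<Rightarrow> real \<Rightarrow> complex^'n" where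
  "rho v w k \<tau> = (\<chi> i. Complex (- \<tau> * v $ i) (sqrt (\<tau>\<^sup>2 + k\<^sup>2) * w $ i))"

lemma Re_vec_rho: "Re_vec (rho v w k \<tau>) = (- \<tau>) *\<^sub>R v"
  by (simp add: Re_vec_def rho_def vec_eq_iff)

lemma cdot_rho_self:
  assumes v: "norm v = 1" and w: "norm w = 1" and vw: "v \<bullet> w = 0"
  shows "cdot (rho v w k \<tau>) (rho v w k \<tau>) + of_real (k\<^sup>2) = 0"
proof -
  let ?s = "sqrt (\<tau>\<^sup>2 + k\<^sup>2)"
  have "(\<Sum>i\<in>UNIV. v $ i * v $ i) = 1" "(\<Sum>i\<in>UNIV. w $ i * w $ i) = 1"
    "(\<Sum>i\<in>UNIV. v $ i * w $ i) = 0"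
    using v w vw by (simp_all add: sum_vec_square inner_vec_def)
  moreover have "Re (cdot (rho v w k \<tau>) (rho v w k \<tau>))
      = \<tau>\<^sup>2 * (\<Sum>i\<in>UNIV. v $ i * v $ i) - ?s\<^sup>2 * (\<Sum>i\<in>UNIV. w $ i * w $ i)"
    by (simp add: cdot_def rho_def Re_sum power2_eq_square algebra_simps sum_subtractf sum_distrib_left)
  moreover have "Im (cdot (rho v w k \<tau>) (rho v w k \<tau>)) = (- 2 * \<tau> * ?s) * (\<Sum>i\<in>UNIV. v $ i * w $ i)"
  proof -
    have "Im (cdot (rho v w k \<tau>) (rho v w k \<tau>)) = (\<Sum>i\<in>UNIV. (- 2 * \<tau> * ?s) * (v $ i * w $ i))"
      by (simp add: cdot_def rho_def Im_sum algebra_simps)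
    then show ?thesis
      by (simp only: sum_distrib_left)
  qed
  ultimately show ?thesis
    by (simp add: complex_eq_iff)
qed

lemma norm_rho_le:
  assumes v: "norm v = 1" and w: "norm w = 1" and k: "0 \<le> k" "k \<le> \<tau>"
  shows "norm (rho v w k \<tau>) \<le> 2 * \<tau>"
proof -
  have vv: "(\<Sum>i\<in>UNIV. (v $ i)\<^sup>2) = 1" and ww: "(\<Sum>i\<in>UNIV. (w $ i)\<^sup>2) = 1"
    using v w sum_vec_square[of v] sum_vec_square[of w] by (simp_all add: power2_eq_square)
  have "(\<Sum>i\<in>UNIV. (norm (rho v w k \<tau> $ i))\<^sup>2)
      = (\<Sum>i\<in>UNIV. \<tau>\<^sup>2 * (v $ i)\<^sup>2 + (\<tau>\<^sup>2 + k\<^sup>2) * (w $ i)\<^sup>2)"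
    by (simp add: rho_def cmod_def power_mult_distrib)
  also have "\<dots> = \<tau>\<^sup>2 * (\<Sum>i\<in>UNIV. (v $ i)\<^sup>2) + (\<tau>\<^sup>2 + k\<^sup>2) * (\<Sum>i\<in>UNIV. (w $ i)\<^sup>2)"
    by (simp add: sum.distrib sum_distrib_left)
  finally have "(norm (rho v w k \<tau>))\<^sup>2 = 2 * \<tau>\<^sup>2 + k\<^sup>2"
    by (simp add: norm_vec_def L2_set_def vv ww)
  moreover have "k\<^sup>2 \<le> \<tau>\<^sup>2"
    using k by (intro power_mono) auto
  moreover have "(2 * \<tau>)\<^sup>2 = 4 * \<tau>\<^sup>2" "0 \<le> \<tau>\<^sup>2"
    by (simp_all add: power_mult_distrib)
  ultimately have "(norm (rho v w k \<tau>))\<^sup>2 \<le> (2 * \<tau>)\<^sup>2"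
    by linarith
  then show ?thesis
    by (rule power2_le_imp_le) (use k in auto)
qed

lemma rho_spherical_cone_bound:
  assumes v: "norm v = 1" and x: "x \<in> spherical_cone xc v \<theta>"
    and \<theta>: "0 \<le> \<theta>" "\<theta> \<le> \<alpha>'" "\<alpha>' \<le> pi" and \<tau>: "0 \<le> \<tau>"
  shows "Re_vec (rho v w k \<tau>) \<bullet> (x - xc) \<le> - cos \<alpha>' * norm (Re_vec (rho v w k \<tau>)) * norm (x - xc)"
proof -
  have "norm (x - xc) * cos \<alpha>' \<le> norm (x - xc) * cos \<theta>"
    using \<theta> by (intro mult_left_mono cos_monotone_0_pi_le) auto
  also have "\<dots> \<le> v \<bullet> (x - xc)"
    using x by (simp add: spherical_cone_def inner_commute)
  finally have "\<tau> * (norm (x - xc) * cos \<alpha>') \<le> \<tau> * (v \<bullet> (x - xc))"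
    using \<tau> by (rule mult_left_mono)
  moreover have "norm (Re_vec (rho v w k \<tau>)) = \<tau>"
    using \<tau> by (simp add: Re_vec_rho v)
  ultimately show ?thesis
    by (simp add: Re_vec_rho mult_ac)
qed

lemma Re_cdot_rho_simplicial_edge:
  fixes \<Psi> :: "real^'m \<Rightarrow> real^'n"
  assumes "linear \<Psi>" and "\<Psi> (axis j 1) \<noteq> 0"
    and "simplicial_cone xc \<Psi> \<subseteq> spherical_cone xc v \<theta>"
    and \<theta>: "0 < \<theta>" "\<theta> < pi/2" and \<tau>: "0 < \<tau>"
  shows "Re (cdot (rho v w k \<tau>) (cvec (\<Psi> (axis j 1)))) < 0"
proof -
  have "0 < cos \<theta> * norm (\<Psi> (axis j 1))"
    using assms(2) \<theta> by (simp add: cos_gt_zero)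
  also have "\<dots> \<le> v \<bullet> \<Psi> (axis j 1)"
    using simplicial_cone_edge_in_spherical_cone[OF assms(1,3)] .
  finally show ?thesis
    using \<tau> by (simp add: Re_cdot_cvec Re_vec_rho)
qed

lemma
  fixes e :: "'n::finite \<Rightarrow> 'm::{finite,wellorder}" and L :: "real^'m::_ \<Rightarrow> real^'m::_"
    and v w xc :: "real^'n"
  assumes e: "bij e" and L: "linear L" and d: "det (matrix L) \<noteq> 0"
    and sub: "simplicial_cone xc (perm_vec e \<circ> L) \<subseteq> spherical_cone xc v \<theta>"
    and v: "norm v = 1" and w: "norm w = 1" and vw: "v \<bullet> w = 0"
    and \<theta>: "0 < \<theta>" "\<theta> < pi/2" and \<tau>: "0 < \<tau>" and k: "0 \<le> k" "k \<le> \<tau>"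
  shows integrable_exp_rho_simplicial_cone:
      "(\<lambda>x. exp (cdot (rho v w k \<tau>) (cvec (x - xc)))) integrable_on simplicial_cone xc (perm_vec e \<circ> L)"
    and norm_integral_exp_rho_simplicial_cone_ge:
      "\<bar>det (matrix L)\<bar> / ((2 * \<tau>) ^ CARD('m) * (\<Prod>j\<in>UNIV. norm (perm_vec e (L (axis j 1)))))
        \<le> norm (integral (simplicial_cone xc (perm_vec e \<circ> L)) (\<lambda>x. exp (cdot (rho v w k \<tau>) (cvec (x - xc)))))"
proof -
  define \<rho> where "\<rho> = rho v w k \<tau>"
  define m where "m j = perm_vec e (L (axis j 1))" for j
  define a where "a j = cdot \<rho> (cvec (m j))" for j
  have neg_edge: "Re (cdot \<rho> (cvec (perm_vec e (L (axis j 1))))) < 0" for j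
    using Re_cdot_rho_simplicial_edge[OF linear_compose[OF L linear_perm_vec]
        perm_vec_linear_axis_nonzero[OF e L d] sub \<theta> \<tau>]
    by (simp add: \<rho>_def)
  then have neg: "Re (a j) < 0" for j
    by (simp add: a_def m_def)
  show "(\<lambda>x. exp (cdot (rho v w k \<tau>) (cvec (x - xc)))) integrable_on simplicial_cone xc (perm_vec e \<circ> L)"
    using integrable_exp_simplicial_cone[OF e L d neg_edge] by (simp add: \<rho>_def)
  have "norm (a j) \<le> 2 * \<tau> * norm (m j)" for j
    using norm_cdot_cvec_le[of \<rho> "m j"] norm_rho_le[OF v w k]
    by (simp add: a_def \<rho>_def) (meson mult_right_mono norm_ge_zero order_trans)
  then have "(\<Prod>j\<in>UNIV. norm (a j)) \<le> (\<Prod>j\<in>UNIV. 2 * \<tau> * norm (m j))"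
    by (intro prod_mono) simp
  also have "\<dots> = (2 * \<tau>) ^ CARD('m) * (\<Prod>j\<in>UNIV. norm (m j))"
    by (simp add: prod.distrib)
  finally have "(\<Prod>j\<in>UNIV. norm (a j)) \<le> (2 * \<tau>) ^ CARD('m) * (\<Prod>j\<in>UNIV. norm (m j))" .
  moreover have "0 < (\<Prod>j\<in>UNIV. norm (a j))"
  proof -
    have "a j \<noteq> 0" for j
      using neg[of j] by auto
    then show ?thesis
      by (simp add: prod_pos)
  qed
  ultimately have "\<bar>det (matrix L)\<bar> / ((2 * \<tau>) ^ CARD('m) * (\<Prod>j\<in>UNIV. norm (m j)))
      \<le> \<bar>det (matrix L)\<bar> / (\<Prod>j\<in>UNIV. norm (a j))"
    by (intro divide_left_mono) auto
  also have "\<dots> = norm (integral (simplicial_cone xc (perm_vec e \<circ> L)) (\<lambda>x. exp (cdot \<rho> (cvec (x - xc)))))"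
  proof -
    have "integral (simplicial_cone xc (perm_vec e \<circ> L)) (\<lambda>x. exp (cdot \<rho> (cvec (x - xc))))
        = of_real \<bar>det (matrix L)\<bar> * (\<Prod>j\<in>UNIV. - 1 / a j)"
      using integral_exp_simplicial_cone[OF e L d neg_edge] by (simp add: a_def m_def)
    then show ?thesis
      by (simp add: norm_mult prod_norm[symmetric] norm_divide prod_dividef)
  qed
  finally show "\<bar>det (matrix L)\<bar> / ((2 * \<tau>) ^ CARD('m) * (\<Prod>j\<in>UNIV. norm (perm_vec e (L (axis j 1)))))
        \<le> norm (integral (simplicial_cone xc (perm_vec e \<circ> L)) (\<lambda>x. exp (cdot (rho v w k \<tau>) (cvec (x - xc)))))"
    by (simp add: m_def \<rho>_def)
qed

section \<open>Planar and octant cones\<close>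

lemma perm_vec_image_orthant:
  fixes e :: "'b::finite \<Rightarrow> 'a::finite"
  assumes "bij e"
  shows "perm_vec e ` {s. \<forall>j. 0 < s $ j} = {s. \<forall>j. 0 < s $ j}"
proof
  show "{s. \<forall>j. 0 < s $ j} \<subseteq> perm_vec e ` {s. \<forall>j. 0 < s $ j}"
  proof
    fix s :: "real^'b" assume "s \<in> {s. \<forall>j. 0 < s $ j}"
    then have "perm_vec (inv e) s \<in> {s. \<forall>j. 0 < s $ j}"
      by simp
    moreover have "s = perm_vec e (perm_vec (inv e) s)"
      by (simp add: perm_vec_inv_right[OF assms])
    ultimately show "s \<in> perm_vec e ` {s. \<forall>j. 0 < s $ j}"
      by (rule rev_image_eqI)
  qed
qed auto

lemma simplicial_cone_perm_vec:
  assumes "bij e"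
  shows "simplicial_cone xc (\<Psi> \<circ> perm_vec e) = simplicial_cone xc \<Psi>"
proof -
  have "(\<lambda>s. xc + \<Psi> s) ` perm_vec e ` {s. \<forall>j. 0 < s $ j} = simplicial_cone xc (\<Psi> \<circ> perm_vec e)"
    by (simp add: simplicial_cone_def image_image)
  then show ?thesis
    by (simp add: simplicial_cone_def perm_vec_image_orthant[OF assms])
qed

lemma abs_det_matrix_columns_2:
  fixes u w :: "real^2"
  assumes u: "u \<noteq> 0" and w: "w \<noteq> 0"
  shows "\<bar>det (matrix (\<lambda>s. s $ 1 *\<^sub>R u + s $ 2 *\<^sub>R w))\<bar>
    = norm u * norm w * sin (arccos ((u \<bullet> w) / (norm u * norm w)))"
proof -
  define c where "c = (u \<bullet> w) / (norm u * norm w)"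
  have nuw: "0 < norm u * norm w"
    using u w by simp
  then have uwc: "u \<bullet> w = c * (norm u * norm w)"
    by (simp add: c_def)
  have "\<bar>c\<bar> \<le> 1"
    using Cauchy_Schwarz_ineq2[of u w] nuw by (simp add: c_def abs_divide divide_le_eq)
  then have sin: "(sin (arccos c))\<^sup>2 = 1 - c\<^sup>2" and sin_nonneg: "0 \<le> sin (arccos c)"
    by (simp_all add: sin_arccos_abs abs_square_le_1)
  have nu: "(norm u)\<^sup>2 = (u $ 1)\<^sup>2 + (u $ 2)\<^sup>2" and nw: "(norm w)\<^sup>2 = (w $ 1)\<^sup>2 + (w $ 2)\<^sup>2"
    and uw: "u \<bullet> w = u $ 1 * w $ 1 + u $ 2 * w $ 2"
    by (simp_all add: norm_vec_def L2_set_def inner_vec_def sum_2)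
  have "det (matrix (\<lambda>s. s $ 1 *\<^sub>R u + s $ 2 *\<^sub>R w)) = u $ 1 * w $ 2 - w $ 1 * u $ 2"
    by (simp add: det_2 matrix_def axis_def)
  also have "(u $ 1 * w $ 2 - w $ 1 * u $ 2)\<^sup>2 = (norm u)\<^sup>2 * (norm w)\<^sup>2 - (u \<bullet> w)\<^sup>2"
    unfolding nu nw uw by algebra
  also have "\<dots> = (norm u * norm w * sin (arccos c))\<^sup>2"
    unfolding uwc power_mult_distrib sin by algebra
  finally have "\<bar>det (matrix (\<lambda>s. s $ 1 *\<^sub>R u + s $ 2 *\<^sub>R w))\<bar>\<^sup>2 = (norm u * norm w * sin (arccos c))\<^sup>2"
    by simp
  moreover have "0 \<le> norm u * norm w * sin (arccos c)"
    using nuw sin_nonneg by simp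
  ultimately show ?thesis
    unfolding c_def by (rule power2_eq_imp_eq[OF _ abs_ge_zero])
qed

lemma sin_ge_min_endpoints:
  assumes "0 \<le> a" "a \<le> x" "x \<le> b" "b \<le> pi"
  shows "min (sin a) (sin b) \<le> sin x"
proof (cases "x \<le> pi/2")
  case True
  then have "sin a \<le> sin x"
    using assms by (intro sin_monotone_2pi_le) auto
  then show ?thesis by simp
next
  case False
  have "sin (pi - b) \<le> sin (pi - x)"
    using assms False by (intro sin_monotone_2pi_le) auto
  then show ?thesis by simp
qed

lemma planar_cone_eq_simplicial_cone:
  fixes e :: "'n::finite \<Rightarrow> 2" and u w xc :: "real^'n"
  assumes e: "bij e"
  shows "{xc + s *\<^sub>R u + t *\<^sub>R w | s t. 0 < s \<and> 0 < t}
    = simplicial_cone xc (perm_vec e \<circ> (\<lambda>s::real^2. s $ 1 *\<^sub>R perm_vec (inv e) u + s $ 2 *\<^sub>R perm_vec (inv e) w))"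
    (is "_ = simplicial_cone xc (perm_vec e \<circ> ?L)")
proof -
  have edge: "perm_vec e (?L s) = s $ 1 *\<^sub>R u + s $ 2 *\<^sub>R w" for s
    by (simp add: vec_eq_iff perm_vec_inv_right[OF e, unfolded vec_eq_iff, simplified])
  show ?thesis
  proof (intro set_eqI iffI)
    fix x assume "x \<in> {xc + s *\<^sub>R u + t *\<^sub>R w | s t. 0 < s \<and> 0 < t}"
    then obtain s t where "0 < s" "0 < t" "x = xc + s *\<^sub>R u + t *\<^sub>R w"
      by auto
    then show "x \<in> simplicial_cone xc (perm_vec e \<circ> ?L)"
      by (auto simp: simplicial_cone_def edge forall_2 add.assoc intro!: image_eqI[of _ _ "vector [s, t]"])
  qed (auto simp: simplicial_cone_def edge forall_2 add.assoc)
qed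

lemma
  fixes u w v z xc :: "real^'n"
  assumes card: "CARD('n) = 2"
    and P: "P = {xc + s *\<^sub>R u + t *\<^sub>R w | s t. 0 < s \<and> 0 < t}" and u: "u \<noteq> 0" and w: "w \<noteq> 0"
    and angle: "0 < arccos ((u \<bullet> w) / (norm u * norm w))" "arccos ((u \<bullet> w) / (norm u * norm w)) < pi"
    and sub: "P \<subseteq> spherical_cone xc v \<theta>"
    and v: "norm v = 1" and z: "norm z = 1" and vz: "v \<bullet> z = 0"
    and \<theta>: "0 < \<theta>" "\<theta> < pi/2" and \<tau>: "0 < \<tau>" and k: "0 \<le> k" "k \<le> \<tau>"
  shows integrable_exp_rho_planar_cone: "(\<lambda>x. exp (cdot (rho v z k \<tau>) (cvec (x - xc)))) integrable_on P"
    and norm_integral_exp_rho_planar_cone_ge: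
      "sin (arccos ((u \<bullet> w) / (norm u * norm w))) / (4 * \<tau>\<^sup>2)
        \<le> norm (integral P (\<lambda>x. exp (cdot (rho v z k \<tau>) (cvec (x - xc)))))"
proof -
  obtain e :: "'n \<Rightarrow> 2" where e: "bij e"
    using finite_same_card_bij[of "UNIV::'n set" "UNIV::2 set"] card by auto
  define L where "L s = s $ 1 *\<^sub>R perm_vec (inv e) u + s $ 2 *\<^sub>R perm_vec (inv e) w" for s :: "real^2"
  have L: "linear L"
    by (auto simp: linear_iff L_def algebra_simps)
  have edge: "perm_vec e (L s) = s $ 1 *\<^sub>R u + s $ 2 *\<^sub>R w" for s
    by (simp add: L_def vec_eq_iff perm_vec_inv_right[OF e, unfolded vec_eq_iff, simplified])
  have P_eq: "P = simplicial_cone xc (perm_vec e \<circ> L)"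
    unfolding P L_def[abs_def] by (rule planar_cone_eq_simplicial_cone[OF e])
  define \<beta> where "\<beta> = arccos ((u \<bullet> w) / (norm u * norm w))"
  have ie: "bij (inv e)"
    using bij_imp_bij_inv[OF e] .
  have "perm_vec (inv e) u \<noteq> 0" "perm_vec (inv e) w \<noteq> 0"
    using u w norm_perm_vec[OF ie, of u] norm_perm_vec[OF ie, of w] by (metis norm_eq_zero)+
  then have det: "\<bar>det (matrix L)\<bar> = norm u * norm w * sin \<beta>"
    using abs_det_matrix_columns_2[of "perm_vec (inv e) u" "perm_vec (inv e) w"]
    by (simp add: L_def[abs_def] \<beta>_def norm_perm_vec[OF ie] inner_perm_vec[OF ie])
  moreover have "0 < sin \<beta>"
    using angle by (simp add: \<beta>_def sin_gt_zero)
  ultimately have "det (matrix L) \<noteq> 0"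
    using u w by auto
  note bound = norm_integral_exp_rho_simplicial_cone_ge[OF e L \<open>det (matrix L) \<noteq> 0\<close>
      sub[unfolded P_eq] v z vz \<theta> \<tau> k]
  show "(\<lambda>x. exp (cdot (rho v z k \<tau>) (cvec (x - xc)))) integrable_on P"
    unfolding P_eq
    by (rule integrable_exp_rho_simplicial_cone[OF e L \<open>det (matrix L) \<noteq> 0\<close>
        sub[unfolded P_eq] v z vz \<theta> \<tau> k])
  have "(\<Prod>j\<in>UNIV. norm (perm_vec e (L (axis j (1::real))))) = norm u * norm w"
    by (simp add: UNIV_2 edge axis_def)
  then have "sin \<beta> / (4 * \<tau>\<^sup>2)
      = \<bar>det (matrix L)\<bar> / ((2 * \<tau>) ^ CARD(2) * (\<Prod>j\<in>UNIV. norm (perm_vec e (L (axis j 1)))))"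
    using u w by (simp add: det power2_eq_square)
  then show "sin (arccos ((u \<bullet> w) / (norm u * norm w))) / (4 * \<tau>\<^sup>2)
      \<le> norm (integral P (\<lambda>x. exp (cdot (rho v z k \<tau>) (cvec (x - xc)))))"
    unfolding \<beta>_def[symmetric] P_eq using bound by simp
qed

lemma rigid_motion_fixing_point:
  assumes "rigid_motion f" "f xc = 0"
  obtains A where "orthogonal_matrix A" "\<And>x. f x = A *v (x - xc)"
proof -
  obtain A b where A: "orthogonal_matrix A" and f: "f = (\<lambda>x. A *v x + b)"
    using assms(1) unfolding rigid_motion_def by auto
  then have "b = - (A *v xc)"
    using assms(2) by (simp add: eq_neg_iff_add_eq_0 add.commute)
  then have "f x = A *v (x - xc)" for x
    by (simp add: f matrix_vector_mult_diff_distrib)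
  with A show ?thesis
    using that by blast
qed

lemma orthogonal_preimage_orthant:
  assumes A: "orthogonal_matrix A" and f: "\<And>x. f x = A *v (x - xc)"
    and P: "f ` P = {y. \<forall>i. 0 < y $ i}"
  shows "P = simplicial_cone xc (\<lambda>y. transpose A *v y)"
proof -
  have AT: "transpose A ** A = mat 1" "A ** transpose A = mat 1"
    using A by (simp_all add: orthogonal_matrix_def)
  have inv_left: "transpose A *v (A *v y) = y" and inv_right: "A *v (transpose A *v y) = y" for y
    by (simp_all only: matrix_vector_mul_assoc AT matrix_vector_mul_lid)
  have mem: "x \<in> P \<longleftrightarrow> f x \<in> {y. \<forall>i. 0 < y $ i}" for x
  proof
    assume "f x \<in> {y. \<forall>i. 0 < y $ i}"
    then obtain x' where "x' \<in> P" "f x' = f x"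
      using P by (metis imageE)
    then have "x' = x"
      using inv_left f by (metis add_diff_cancel_left' diff_add_cancel)
    with \<open>x' \<in> P\<close> show "x \<in> P" by simp
  qed (use P in blast)
  show ?thesis
  proof (intro set_eqI iffI)
    fix x assume "x \<in> P"
    moreover have "x = xc + transpose A *v f x"
      unfolding f inv_left by simp
    ultimately show "x \<in> simplicial_cone xc (\<lambda>y. transpose A *v y)"
      unfolding simplicial_cone_def mem by (rule rev_image_eqI)
  next
    fix x assume "x \<in> simplicial_cone xc (\<lambda>y. transpose A *v y)"
    then obtain y where "y \<in> {y. \<forall>i. 0 < y $ i}" "x = xc + transpose A *v y"
      by (auto simp: simplicial_cone_def simp del: transpose_matrix_vector)
    moreover have "f (xc + transpose A *v y) = y"
      unfolding f add_diff_cancel_left' inv_right ..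
    ultimately show "x \<in> P"
      by (simp add: mem del: transpose_matrix_vector)
  qed
qed

lemma
  fixes v z xc :: "real^'n" and f :: "real^'n \<Rightarrow> real^'n"
  assumes card: "CARD('n) = 3"
    and f: "rigid_motion f" "f xc = 0" and P: "f ` P = {y. \<forall>i. 0 < y $ i}"
    and sub: "P \<subseteq> spherical_cone xc v \<theta>"
    and v: "norm v = 1" and z: "norm z = 1" and vz: "v \<bullet> z = 0"
    and \<theta>: "0 < \<theta>" "\<theta> < pi/2" and \<tau>: "0 < \<tau>" and k: "0 \<le> k" "k \<le> \<tau>"
  shows integrable_exp_rho_octant: "(\<lambda>x. exp (cdot (rho v z k \<tau>) (cvec (x - xc)))) integrable_on P"
    and norm_integral_exp_rho_octant_ge:
      "1 / (8 * \<tau> ^ 3) \<le> norm (integral P (\<lambda>x. exp (cdot (rho v z k \<tau>) (cvec (x - xc)))))"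
proof -
  obtain A where A: "orthogonal_matrix A" and fA: "\<And>x. f x = A *v (x - xc)"
    using rigid_motion_fixing_point[OF f] by blast
  obtain e :: "'n \<Rightarrow> 3" where e: "bij e"
    using finite_same_card_bij[of "UNIV::'n set" "UNIV::3 set"] card by auto
  define L where "L = perm_vec (inv e) \<circ> (\<lambda>y. transpose A *v y) \<circ> perm_vec e"
  have "P = simplicial_cone xc (\<lambda>y. transpose A *v y)"
    by (rule orthogonal_preimage_orthant[OF A fA P])
  also have "\<dots> = simplicial_cone xc ((\<lambda>y. transpose A *v y) \<circ> perm_vec e)"
    by (rule simplicial_cone_perm_vec[OF e, symmetric])
  also have "(\<lambda>y. transpose A *v y) \<circ> perm_vec e = perm_vec e \<circ> L"
    by (simp add: L_def fun_eq_iff perm_vec_inv_right[OF e] del: transpose_matrix_vector)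
  finally have P_eq: "P = simplicial_cone xc (perm_vec e \<circ> L)" .
  have "orthogonal_transformation (\<lambda>y. transpose A *v y)"
    using A by (simp add: orthogonal_transformation_matrix orthogonal_matrix_transpose
        del: transpose_matrix_vector)
  then have oL: "orthogonal_transformation L"
    unfolding L_def using orthogonal_transformation_perm_vec e bij_imp_bij_inv[OF e]
    by (metis orthogonal_transformation_compose)
  then have L: "linear L" and det: "\<bar>det (matrix L)\<bar> = 1"
    by (simp_all add: orthogonal_transformation_def orthogonal_transformation_det)
  then have d: "det (matrix L) \<noteq> 0"
    by auto
  show "(\<lambda>x. exp (cdot (rho v z k \<tau>) (cvec (x - xc)))) integrable_on P"
    unfolding P_eq
    by (rule integrable_exp_rho_simplicial_cone[OF e L d sub[unfolded P_eq] v z vz \<theta> \<tau> k])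
  have "norm (perm_vec e (L (axis j 1))) = 1" for j
    using orthogonal_transformation_norm[OF orthogonal_transformation_perm_vec[OF e]]
      orthogonal_transformation_norm[OF oL] by simp
  then show "1 / (8 * \<tau> ^ 3) \<le> norm (integral P (\<lambda>x. exp (cdot (rho v z k \<tau>) (cvec (x - xc)))))"
    using norm_integral_exp_rho_simplicial_cone_ge[OF e L d sub[unfolded P_eq] v z vz \<theta> \<tau> k]
    by (simp add: P_eq det power_mult_distrib)
qed

section \<open>Cone pairs of the class G\<close>

lemma in_G_norm_integral_ge:
  fixes Q P :: "(real^'n) set" and v z xc :: "real^'n"
  assumes dim: "CARD('n) = 2 \<or> CARD('n) = 3"
    and \<alpha>: "0 < 2 * \<alpha>m" "2 * \<alpha>m < 2 * \<alpha>M" "2 * \<alpha>M < pi"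
    and G: "in_G \<alpha>m \<alpha>M \<alpha>' Q P xc" and Q: "Q = spherical_cone xc v \<theta>"
    and v: "norm v = 1" and z: "norm z = 1" and vz: "v \<bullet> z = 0"
    and \<theta>: "0 < \<theta>" "\<theta> < pi/2" and \<tau>: "0 < \<tau>" and k: "0 \<le> k" "k \<le> \<tau>"
  shows "(\<lambda>x. exp (cdot (rho v z k \<tau>) (cvec (x - xc)))) integrable_on P \<and>
    min (min (sin (2 * \<alpha>m)) (sin (2 * \<alpha>M)) / 4) (1 / 8) * \<tau> powr (- real CARD('n))
      \<le> norm (integral P (\<lambda>x. exp (cdot (rho v z k \<tau>) (cvec (x - xc)))))"
proof -
  have sub: "P \<subseteq> spherical_cone xc v \<theta>"
    using G Q unfolding in_G_def by blast
  have powr: "\<tau> powr (- real n) = 1 / \<tau> ^ n" for n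
    using \<tau> by (simp add: powr_minus powr_realpow divide_inverse)
  from dim show ?thesis
  proof
    assume card: "CARD('n) = 2"
    then obtain u w where u: "u \<noteq> 0" and w: "w \<noteq> 0"
      and P: "P = {xc + s *\<^sub>R u + t *\<^sub>R w | s t. 0 < s \<and> 0 < t}"
      and angle: "2 * \<alpha>m < arccos ((u \<bullet> w) / (norm u * norm w))"
        "arccos ((u \<bullet> w) / (norm u * norm w)) < 2 * \<alpha>M"
      using G unfolding in_G_def by blast
    have "min (sin (2 * \<alpha>m)) (sin (2 * \<alpha>M)) \<le> sin (arccos ((u \<bullet> w) / (norm u * norm w)))"
      using angle \<alpha> by (intro sin_ge_min_endpoints) auto
    then have "min (min (sin (2 * \<alpha>m)) (sin (2 * \<alpha>M)) / 4) (1 / 8)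
        \<le> sin (arccos ((u \<bullet> w) / (norm u * norm w))) / 4"
      by (auto simp: min_def)
    then have "min (min (sin (2 * \<alpha>m)) (sin (2 * \<alpha>M)) / 4) (1 / 8) / \<tau>\<^sup>2
        \<le> sin (arccos ((u \<bullet> w) / (norm u * norm w))) / 4 / \<tau>\<^sup>2"
      by (rule divide_right_mono) simp
    then have "min (min (sin (2 * \<alpha>m)) (sin (2 * \<alpha>M)) / 4) (1 / 8) * \<tau> powr (- real CARD('n))
        \<le> sin (arccos ((u \<bullet> w) / (norm u * norm w))) / (4 * \<tau>\<^sup>2)"
      using powr[of 2] by (simp add: card)
    with angle \<alpha> show ?thesis
      using integrable_exp_rho_planar_cone[OF card P u w _ _ sub v z vz \<theta> \<tau> k]
        norm_integral_exp_rho_planar_cone_ge[OF card P u w _ _ sub v z vz \<theta> \<tau> k]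
      by force
  next
    assume card: "CARD('n) = 3"
    then obtain f where f: "rigid_motion f" "f xc = 0" "f ` P = {y. \<forall>i. 0 < y $ i}"
      using G unfolding in_G_def by blast
    have "min (min (sin (2 * \<alpha>m)) (sin (2 * \<alpha>M)) / 4) (1 / 8) / \<tau> ^ 3 \<le> 1 / 8 / \<tau> ^ 3"
      using \<tau> by (intro divide_right_mono) auto
    then show ?thesis
      using integrable_exp_rho_octant[OF card f sub v z vz \<theta> \<tau> k]
        norm_integral_exp_rho_octant_ge[OF card f sub v z vz \<theta> \<tau> k] powr[of 3]
      by (simp add: card)
  qed
qed

lemma in_G_exists_rho:
  fixes Q P :: "(real^'n) set" and xc :: "real^'n"
  assumes dim: "CARD('n) = 2 \<or> CARD('n) = 3"
    and \<alpha>: "0 < 2 * \<alpha>m" "2 * \<alpha>m < 2 * \<alpha>M" "2 * \<alpha>M < pi" "2 * \<alpha>M < 2 * \<alpha>'" "2 * \<alpha>' < pi"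
    and k: "0 < k" and G: "in_G \<alpha>m \<alpha>M \<alpha>' Q P xc"
  shows "\<exists>\<rho> :: real \<Rightarrow> complex^'n.
    (\<forall>\<tau>>0. cdot (\<rho> \<tau>) (\<rho> \<tau>) + complex_of_real (k^2) = 0 \<and> \<tau> = norm (Re_vec (\<rho> \<tau>)) \<and>
        (\<forall>x\<in>Q. Re_vec (\<rho> \<tau>) \<bullet> (x - xc) \<le> - cos \<alpha>' * norm (Re_vec (\<rho> \<tau>)) * norm (x - xc))) \<and>
    (\<forall>\<tau>\<ge>k. (\<lambda>x. exp (cdot (\<rho> \<tau>) (cvec (x - xc)))) integrable_on P \<and>
        min (min (sin (2 * \<alpha>m)) (sin (2 * \<alpha>M)) / 4) (1 / 8) * \<tau> powr (- real CARD('n))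
          \<le> norm (integral P (\<lambda>x. exp (cdot (\<rho> \<tau>) (cvec (x - xc))))))"
proof -
  obtain v \<theta> where v: "norm v = 1" and \<theta>: "0 < \<theta>" "\<theta> < pi / 2" "\<theta> \<le> \<alpha>'"
    and Q: "Q = spherical_cone xc v \<theta>"
    using G unfolding in_G_def by auto
  have "2 \<le> DIM(real^'n)"
    using dim by auto
  then obtain z0 :: "real^'n" where "z0 \<noteq> 0" "orthogonal v z0"
    by (rule orthogonal_to_vector_exists)
  define z where "z = z0 /\<^sub>R norm z0"
  have z: "norm z = 1" and vz: "v \<bullet> z = 0"
    using \<open>z0 \<noteq> 0\<close> \<open>orthogonal v z0\<close> by (simp_all add: z_def orthogonal_def)
  show ?thesis
  proof (intro exI[of _ "rho v z k"] conjI allI impI ballI)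
    fix \<tau> :: real assume "0 < \<tau>"
    show "cdot (rho v z k \<tau>) (rho v z k \<tau>) + of_real (k\<^sup>2) = 0"
      by (rule cdot_rho_self[OF v z vz])
    show "\<tau> = norm (Re_vec (rho v z k \<tau>))"
      using \<open>0 < \<tau>\<close> by (simp add: Re_vec_rho v)
    show "Re_vec (rho v z k \<tau>) \<bullet> (x - xc)
        \<le> - cos \<alpha>' * norm (Re_vec (rho v z k \<tau>)) * norm (x - xc)" if "x \<in> Q" for x
      using that \<theta> \<alpha> \<open>0 < \<tau>\<close> by (intro rho_spherical_cone_bound[OF v]) (auto simp: Q)
  next
    fix \<tau> :: real assume "k \<le> \<tau>"
    note bound = in_G_norm_integral_ge[OF dim \<alpha>(1-3) G Q v z vz \<theta>(1,2) _ _ \<open>k \<le> \<tau>\<close>]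
    show "(\<lambda>x. exp (cdot (rho v z k \<tau>) (cvec (x - xc)))) integrable_on P"
      using bound k \<open>k \<le> \<tau>\<close> by simp
    show "min (min (sin (2 * \<alpha>m)) (sin (2 * \<alpha>M)) / 4) (1 / 8) * \<tau> powr (- real CARD('n))
        \<le> norm (integral P (\<lambda>x. exp (cdot (rho v z k \<tau>) (cvec (x - xc)))))"
      using bound k \<open>k \<le> \<tau>\<close> by simp
  qed
qed

theorem mainTheorem13:
  fixes \<alpha>m \<alpha>M :: real
  assumes dim: "CARD('n) = 2 \<or> CARD('n) = 3"
    and "0 < 2 * \<alpha>m" and "2 * \<alpha>m < 2 * \<alpha>M" and "2 * \<alpha>M < pi"
  shows "\<exists>c>0. \<forall>\<alpha>'. 2 * \<alpha>M < 2 * \<alpha>' \<and> 2 * \<alpha>' < pi \<longrightarrow>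
          (\<exists>C>0. \<forall>k>0. \<forall>(Q :: (real^'n) set) P xc. in_G \<alpha>m \<alpha>M \<alpha>' Q P xc \<longrightarrow>
             (\<exists>\<rho> :: real \<Rightarrow> complex^'n.
                (\<forall>\<tau>>0. cdot (\<rho> \<tau>) (\<rho> \<tau>) + complex_of_real (k^2) = 0 \<and>
                        \<tau> = norm (Re_vec (\<rho> \<tau>)) \<and>
                        (\<forall>x\<in>Q. Re_vec (\<rho> \<tau>) \<bullet> (x - xc)
                                \<le> - cos \<alpha>' * norm (Re_vec (\<rho> \<tau>)) * norm (x - xc))) \<and>
                (\<forall>\<tau>\<ge>k * C.
                   (\<lambda>x. exp (cdot (\<rho> \<tau>) (cvec (x - xc)))) integrable_on P \<and>
                   norm (integral P (\<lambda>x. exp (cdot (\<rho> \<tau>) (cvec (x - xc)))))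
                     \<ge> c * \<tau> powr (- real CARD('n)))))"
proof -
  have "0 < sin (2 * \<alpha>m)" "0 < sin (2 * \<alpha>M)"
    using assms by (auto intro!: sin_gt_zero)
  then have "0 < min (min (sin (2 * \<alpha>m)) (sin (2 * \<alpha>M)) / 4) (1 / 8)"
    by simp
  with in_G_exists_rho[OF dim assms(2-4)] show ?thesis
    by (intro exI[of _ "min (min (sin (2 * \<alpha>m)) (sin (2 * \<alpha>M)) / 4) (1 / 8)"] conjI allI impI
        exI[of _ "1::real"]) auto
qed

end
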